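(* Let $G$ be a graph, $X\subseteq T\subseteq V(G)$, $k'$ an integer, and let $(L^*,R^* )$ be a lean $(X,T,k')$-witness. Let $T'=(T\setminus L^* )\cup(L^*\cap R^* )$. Then the adhesion of $T'$ is at most $\max(|L^*\cap R^*|,\sigma(T))$, and $|T|-|T'|\ge \frac{|L^*\cap T|}{2\max\{1,|L^*\cap R^*|\}}$.
   Context: A vertex cut of $G$ is an ordered pair $(L,R)$ with $L\cup R=V(G)$, $L\setminus R,R\setminus L\ne\emptyset$ and no edge between $L\setminus R$ and $R\setminus L$. The adhesion $\sigma(Z)$ of a set $Z$ is the maximum over connected components $C$ of $G\setminus Z$ of $|N_G(C)|$. An $(X,T,k')$-witness is a vertex cut $(L,R)$ of $G$ with $|L\cap R|\le k'$, $|L\cap T|>|L\cap R|$, and $X\subseteq R$. It is lean if there exist $|L\cap R|$ vertex-disjoint paths in $G[L]$, one starting from each vertex of $L\cap R$, each ending at a vertex of $L\cap T$. *)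

theory Defs
  imports Complex_Main
begin

definition graph :: "'a set \<Rightarrow> ('a \<Rightarrow> 'a \<Rightarrow> bool) \<Rightarrow> bool" where
  "graph V E \<longleftrightarrow> finite V \<and> (\<forall>u v. E u v \<longrightarrow> E v u) \<and> (\<forall>u. \<not> E u u)
     \<and> (\<forall>u v. E u v \<longrightarrow> u \<in> V \<and> v \<in> V)"

definition reach_in :: "('a \<Rightarrow> 'a \<Rightarrow> bool) \<Rightarrow> 'a set \<Rightarrow> 'a \<Rightarrow> 'a \<Rightarrow> bool" where
  "reach_in E S = (\<lambda>u v. E u v \<and> u \<in> S \<and> v \<in> S)\<^sup>*\<^sup>*"

definition components :: "('a \<Rightarrow> 'a \<Rightarrow> bool) \<Rightarrow> 'a set \<Rightarrow> 'a set set" where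
  "components E S = {{y. reach_in E S x y} | x. x \<in> S}"

definition nbhd :: "'a set \<Rightarrow> ('a \<Rightarrow> 'a \<Rightarrow> bool) \<Rightarrow> 'a set \<Rightarrow> 'a set" where
  "nbhd V E C = {v \<in> V - C. \<exists>u \<in> C. E u v}"

definition adhesion :: "'a set \<Rightarrow> ('a \<Rightarrow> 'a \<Rightarrow> bool) \<Rightarrow> 'a set \<Rightarrow> nat" where
  "adhesion V E Z = Max (insert 0 {card (nbhd V E C) | C. C \<in> components E (V - Z)})"

definition vertex_cut :: "'a set \<Rightarrow> ('a \<Rightarrow> 'a \<Rightarrow> bool) \<Rightarrow> 'a set \<Rightarrow> 'a set \<Rightarrow> bool" where
  "vertex_cut V E L R \<longleftrightarrow> L \<union> R = V \<and> L - R \<noteq> {} \<and> R - L \<noteq> {}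
     \<and> (\<forall>u \<in> L - R. \<forall>v \<in> R - L. \<not> E u v)"

definition witness :: "'a set \<Rightarrow> ('a \<Rightarrow> 'a \<Rightarrow> bool) \<Rightarrow> 'a set \<Rightarrow> 'a set \<Rightarrow> int
      \<Rightarrow> 'a set \<Rightarrow> 'a set \<Rightarrow> bool" where
  "witness V E X T k L R \<longleftrightarrow> vertex_cut V E L R \<and> int (card (L \<inter> R)) \<le> k
     \<and> card (L \<inter> T) > card (L \<inter> R) \<and> X \<subseteq> R"

definition path_in :: "('a \<Rightarrow> 'a \<Rightarrow> bool) \<Rightarrow> 'a set \<Rightarrow> 'a list \<Rightarrow> bool" where
  "path_in E S p \<longleftrightarrow> p \<noteq> [] \<and> distinct p \<and> set p \<subseteq> S \<and> successively E p"

definition lean_witness :: "'a set \<Rightarrow> ('a \<Rightarrow> 'a \<Rightarrow> bool) \<Rightarrow> 'a set \<Rightarrow> 'a set \<Rightarrow> int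
      \<Rightarrow> 'a set \<Rightarrow> 'a set \<Rightarrow> bool" where
  "lean_witness V E X T k L R \<longleftrightarrow> witness V E X T k L R \<and>
     (\<exists>P :: 'a \<Rightarrow> 'a list.
        (\<forall>s \<in> L \<inter> R. path_in E L (P s) \<and> hd (P s) = s \<and> last (P s) \<in> L \<inter> T)
      \<and> (\<forall>s \<in> L \<inter> R. \<forall>t \<in> L \<inter> R. s \<noteq> t \<longrightarrow> set (P s) \<inter> set (P t) = {}))"

end

theory Submission
  imports Defs "HOL-Library.Disjoint_Sets"
begin

text \<open>
  Since \<open>L \<inter> R \<subseteq> T'\<close>, every component \<open>C\<close> of \<open>G - T'\<close> lies on
  one side of the cut. On the \<open>L\<close>-side, \<open>N(C) \<subseteq> L \<inter> T' = L \<inter> R\<close>. On the \<open>R\<close>-side, \<open>C\<close> avoids \<open>T\<close>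
  and so lies in a component \<open>D\<close> of \<open>G - T\<close>; every vertex of \<open>T'\<close> is joined to \<open>T\<close> by a walk (the
  lean paths for \<open>L \<inter> R\<close>, trivial ones for \<open>T - L\<close>), these walks are pairwise disjoint, and each
  walk started at a vertex of \<open>N(C)\<close> must leave \<open>D\<close> through a vertex of \<open>N(D)\<close>; hence
  \<open>|N(C)| \<le> |N(D)| \<le> \<sigma>(T)\<close>. The size estimate is \<open>|T| - |T'| = |L \<inter> T| - |L \<inter> R|\<close> with
  \<open>|L \<inter> T| > |L \<inter> R|\<close>.
\<close>

lemma reach_in_step:
  "reach_in E S x u \<Longrightarrow> E u v \<Longrightarrow> u \<in> S \<Longrightarrow> v \<in> S \<Longrightarrow> reach_in E S x v"
  unfolding reach_in_def by (simp add: rtranclp.rtrancl_into_rtrancl)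

lemma reach_in_mem: "reach_in E S x y \<Longrightarrow> x \<in> S \<Longrightarrow> y \<in> S"
  unfolding reach_in_def by (induction rule: rtranclp_induct) auto

lemma reach_in_mono: "reach_in E S x y \<Longrightarrow> S \<subseteq> S' \<Longrightarrow> reach_in E S' x y"
  unfolding reach_in_def by (induction rule: rtranclp_induct) (auto intro: rtranclp.rtrancl_into_rtrancl)

lemma reach_in_within_reachable:
  assumes "reach_in E S x y"
  shows "reach_in E {z. reach_in E S x z} x y"
  using assms[unfolded reach_in_def]
proof (induction rule: rtranclp_induct)
  case base
  show ?case unfolding reach_in_def by simp
next
  case (step u v)
  then have "reach_in E S x u" "reach_in E S x v"
    unfolding reach_in_def by (auto intro: rtranclp.rtrancl_into_rtrancl)
  with step show ?case by (auto intro: reach_in_step)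
qed

lemma reach_in_closed:
  assumes "reach_in E S x y" "x \<in> A"
    and "\<And>u v. u \<in> A \<Longrightarrow> u \<in> S \<Longrightarrow> v \<in> S \<Longrightarrow> E u v \<Longrightarrow> v \<in> A"
  shows "y \<in> A"
  using assms(1) unfolding reach_in_def
  by (induction rule: rtranclp_induct) (auto intro: assms(2,3))

lemma component_subset: "C \<in> components E S \<Longrightarrow> C \<subseteq> S"
  unfolding components_def using reach_in_mem by fastforce

lemma component_subset_component:
  assumes "C \<in> components E S" "C \<subseteq> S'"
  obtains D where "D \<in> components E S'" "C \<subseteq> D"
proof -
  obtain x where x: "x \<in> S" and C: "C = {y. reach_in E S x y}"
    using assms(1) unfolding components_def by blast
  have "x \<in> S'" using x C assms(2) unfolding reach_in_def by auto
  then have "{y. reach_in E S' x y} \<in> components E S'" unfolding components_def by blast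
  moreover have "C \<subseteq> {y. reach_in E S' x y}"
    using C assms(2) by (auto intro: reach_in_mono[OF reach_in_within_reachable])
  ultimately show thesis by (rule that)
qed

lemma nbhd_component_subset: "C \<in> components E (V - Z) \<Longrightarrow> nbhd V E C \<subseteq> Z"
  unfolding components_def nbhd_def using reach_in_mem reach_in_step by fastforce

lemma finite_components: "finite S \<Longrightarrow> finite (components E S)"
  unfolding components_def by (simp add: setcompr_eq_image)

lemma adhesion_leI:
  assumes "finite V" "\<And>C. C \<in> components E (V - Z) \<Longrightarrow> card (nbhd V E C) \<le> m"
  shows "adhesion V E Z \<le> m"
  unfolding adhesion_def using assms finite_components[of "V - Z" E]
  by (subst Max_le_iff) (auto simp: setcompr_eq_image)

lemma card_nbhd_le_adhesion:
  "finite V \<Longrightarrow> C \<in> components E (V - Z) \<Longrightarrow> card (nbhd V E C) \<le> adhesion V E Z"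
  unfolding adhesion_def using finite_components[of "V - Z" E]
  by (intro Max_ge) (auto simp: setcompr_eq_image)

lemma component_within_cut_side:
  assumes "graph V E" "vertex_cut V E L R" "L \<inter> R \<subseteq> Z" "C \<in> components E (V - Z)"
  shows "C \<subseteq> L - R \<or> C \<subseteq> R - L"
proof -
  have sym: "\<And>u v. E u v \<Longrightarrow> E v u" using assms(1) unfolding graph_def by blast
  have V: "V = L \<union> R" and cut: "\<And>u v. u \<in> L - R \<Longrightarrow> v \<in> R - L \<Longrightarrow> \<not> E u v"
    using assms(2) unfolding vertex_cut_def by auto
  obtain x where x: "x \<in> V - Z" and C: "C = {y. reach_in E (V - Z) x y}"
    using assms(4) unfolding components_def by blast
  have closed_L: "v \<in> L - R" if "u \<in> L - R" "v \<in> V - Z" "E u v" for u v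
    using that V assms(3) cut by blast
  have closed_R: "v \<in> R - L" if "u \<in> R - L" "v \<in> V - Z" "E u v" for u v
    using that V assms(3) cut sym by blast
  have C_subset: "C \<subseteq> A"
    if "x \<in> A" and closed: "\<And>u v. u \<in> A \<Longrightarrow> v \<in> V - Z \<Longrightarrow> E u v \<Longrightarrow> v \<in> A" for A
  proof
    fix y assume "y \<in> C"
    then have "reach_in E (V - Z) x y" using C by simp
    then show "y \<in> A" by (rule reach_in_closed) (use that in blast)+
  qed
  have "x \<in> L - R \<or> x \<in> R - L" using x V assms(3) by blast
  moreover have "C \<subseteq> L - R" if "x \<in> L - R" using that closed_L by (rule C_subset)
  moreover have "C \<subseteq> R - L" if "x \<in> R - L" using that closed_R by (rule C_subset)
  ultimately show ?thesis by blast
qed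

lemma nbhd_subset_cut_side:
  "vertex_cut V E L R \<Longrightarrow> C \<subseteq> L - R \<Longrightarrow> nbhd V E C \<subseteq> L"
  unfolding vertex_cut_def nbhd_def by blast

text \<open>The lean paths live in \<open>G[L]\<close>; the counting argument only needs disjoint walks in \<open>G\<close>.\<close>
definition disjointly_linked :: "'a set \<Rightarrow> ('a \<Rightarrow> 'a \<Rightarrow> bool) \<Rightarrow> 'a set \<Rightarrow> 'a set \<Rightarrow> bool" where
  "disjointly_linked V E A B \<longleftrightarrow> (\<exists>Q :: 'a \<Rightarrow> 'a list.
     (\<forall>a \<in> A. Q a \<noteq> [] \<and> set (Q a) \<subseteq> V \<and> successively E (Q a) \<and> hd (Q a) = a \<and> last (Q a) \<in> B)
   \<and> disjoint_family_on (\<lambda>a. set (Q a)) A)"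

lemma disjointly_linked_mono:
  "disjointly_linked V E A B \<Longrightarrow> A' \<subseteq> A \<Longrightarrow> disjointly_linked V E A' B"
  unfolding disjointly_linked_def by (meson disjoint_family_on_mono subsetD)

lemma card_le_if_disjoint_family_meets:
  assumes "finite B" "\<And>a. a \<in> A \<Longrightarrow> F a \<inter> B \<noteq> {}" "disjoint_family_on F A"
  shows "card A \<le> card B"
proof -
  define f where "f a = (SOME b. b \<in> F a \<inter> B)" for a
  have f: "f a \<in> F a \<inter> B" if "a \<in> A" for a
    unfolding f_def some_in_eq by (rule assms(2)[OF that])
  have "inj_on f A"
  proof (rule inj_onI)
    fix a a' assume a: "a \<in> A" "a' \<in> A" "f a = f a'"
    show "a = a'"
    proof (rule ccontr)
      assume "a \<noteq> a'"
      then have "F a \<inter> F a' = {}" by (rule disjoint_family_onD[OF assms(3) a(1,2)])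
      then show False using f[OF a(1)] f[OF a(2)] a(3) by auto
    qed
  qed
  moreover have "f ` A \<subseteq> B" using f by blast
  ultimately show ?thesis using assms(1) by (rule card_inj_on_le)
qed

lemma successively_leaves_through_nbhd:
  assumes "successively E p" "set p \<subseteq> V" "p \<noteq> []" "hd p \<in> D" "last p \<notin> D"
  shows "\<exists>v \<in> set p. v \<in> nbhd V E D"
  using assms
proof (induction p rule: induct_list012)
  case (3 u w p)
  show ?case
  proof (cases "w \<in> D")
    case True
    then show ?thesis using 3 by auto
  next
    case False
    then show ?thesis using 3 unfolding nbhd_def by auto
  qed
qed auto

text \<open>The walk from \<open>v \<in> N(C)\<close> to \<open>T\<close>, prefixed by a neighbour of \<open>v\<close> in \<open>C\<close>, starts in \<open>D\<close> and
  ends outside \<open>D\<close>, so it meets \<open>N(D)\<close>; it does so after its first vertex, i.e. on the walk itself.\<close>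
lemma card_nbhd_le_if_disjointly_linked:
  assumes "finite V" "disjointly_linked V E (nbhd V E C) T" "C \<subseteq> D" "D \<subseteq> V - T"
  shows "card (nbhd V E C) \<le> card (nbhd V E D)"
proof -
  obtain Q where Q: "\<And>v. v \<in> nbhd V E C \<Longrightarrow>
      Q v \<noteq> [] \<and> set (Q v) \<subseteq> V \<and> successively E (Q v) \<and> hd (Q v) = v \<and> last (Q v) \<in> T"
    and disj: "disjoint_family_on (\<lambda>v. set (Q v)) (nbhd V E C)"
    using assms(2) unfolding disjointly_linked_def by blast
  have "set (Q v) \<inter> nbhd V E D \<noteq> {}" if v: "v \<in> nbhd V E C" for v
  proof -
    obtain u where u: "u \<in> C" "E u v" using v unfolding nbhd_def by blast
    have "\<exists>w \<in> set (u # Q v). w \<in> nbhd V E D"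
      using Q[OF v] u assms(3,4)
      by (intro successively_leaves_through_nbhd) (auto simp: successively_Cons)
    moreover have "u \<notin> nbhd V E D" using u assms(3) unfolding nbhd_def by blast
    ultimately show ?thesis by auto
  qed
  moreover have "finite (nbhd V E D)" using assms(1) unfolding nbhd_def by simp
  ultimately show ?thesis using disj by (intro card_le_if_disjoint_family_meets)
qed

lemma lean_witness_disjointly_linked:
  assumes "T \<subseteq> V" "lean_witness V E X T k L R"
  shows "disjointly_linked V E ((T - L) \<union> (L \<inter> R)) T"
proof -
  have LV: "L \<subseteq> V"
    using assms(2) unfolding lean_witness_def witness_def vertex_cut_def by blast
  obtain P where P: "\<And>s. s \<in> L \<inter> R \<Longrightarrow> path_in E L (P s) \<and> hd (P s) = s \<and> last (P s) \<in> L \<inter> T"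
    and disjP: "\<And>s t. s \<in> L \<inter> R \<Longrightarrow> t \<in> L \<inter> R \<Longrightarrow> s \<noteq> t \<Longrightarrow> set (P s) \<inter> set (P t) = {}"
    using assms(2) unfolding lean_witness_def by blast
  define Q where "Q v = (if v \<in> L then P v else [v])" for v
  have "disjoint_family_on (\<lambda>v. set (Q v)) ((T - L) \<union> (L \<inter> R))"
    unfolding disjoint_family_on_def Q_def using P disjP by (auto simp: path_in_def) blast
  moreover have "Q v \<noteq> [] \<and> set (Q v) \<subseteq> V \<and> successively E (Q v) \<and> hd (Q v) = v \<and> last (Q v) \<in> T"
    if "v \<in> (T - L) \<union> (L \<inter> R)" for v
    using that P[of v] LV assms(1) unfolding Q_def path_in_def by auto
  ultimately show ?thesis unfolding disjointly_linked_def by blast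
qed

lemma adhesion_le_if_disjointly_linked:
  assumes "graph V E" "vertex_cut V E L R" "disjointly_linked V E ((T - L) \<union> (L \<inter> R)) T"
  shows "adhesion V E ((T - L) \<union> (L \<inter> R)) \<le> max (card (L \<inter> R)) (adhesion V E T)"
proof (rule adhesion_leI)
  let ?T' = "(T - L) \<union> (L \<inter> R)"
  show "finite V" using assms(1) unfolding graph_def by blast
  fix C assume C: "C \<in> components E (V - ?T')"
  have N: "nbhd V E C \<subseteq> ?T'" using C by (rule nbhd_component_subset)
  consider "C \<subseteq> L - R" | "C \<subseteq> R - L"
    using component_within_cut_side[OF assms(1,2) _ C] by blast
  then show "card (nbhd V E C) \<le> max (card (L \<inter> R)) (adhesion V E T)"
  proof cases
    case 1
    have "nbhd V E C \<subseteq> L \<inter> R" using N nbhd_subset_cut_side[OF assms(2) 1] by blast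
    moreover have "finite (L \<inter> R)"
      using assms(2) \<open>finite V\<close> unfolding vertex_cut_def by (metis finite_Int finite_Un)
    ultimately show ?thesis by (simp add: card_mono le_max_iff_disj)
  next
    case 2
    have "C \<subseteq> V - T" using 2 component_subset[OF C] by blast
    then obtain D where D: "D \<in> components E (V - T)" "C \<subseteq> D"
      using C component_subset_component by metis
    have "card (nbhd V E C) \<le> card (nbhd V E D)"
      using \<open>finite V\<close> disjointly_linked_mono[OF assms(3) N] D(2) component_subset[OF D(1)]
      by (rule card_nbhd_le_if_disjointly_linked)
    also have "\<dots> \<le> adhesion V E T" using \<open>finite V\<close> D(1) by (rule card_nbhd_le_adhesion)
    finally show ?thesis by simp
  qed
qed

lemma card_Diff_Un_Int:
  assumes "finite T" "finite L"
  shows "card ((T - L) \<union> (L \<inter> R)) + card (L \<inter> T) = card T + card (L \<inter> R)"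
proof -
  have "card T = card (T - L) + card (L \<inter> T)"
    using assms(1) by (metis Int_commute card_Int_Diff add.commute)
  moreover have "card ((T - L) \<union> (L \<inter> R)) = card (T - L) + card (L \<inter> R)"
    using assms by (intro card_Un_disjoint) auto
  ultimately show ?thesis by simp
qed

lemma diff_ge_div_twice_max_one:
  fixes a s :: nat
  assumes "s < a"
  shows "real a / (2 * real (max 1 s)) \<le> real a - real s"
proof (cases "s = 0")
  case False
  then have s: "real s \<ge> 1" and "real a \<ge> real s + 1" using assms by auto
  then have "(2 * real s - 1) * (real s + 1) \<le> (2 * real s - 1) * real a"
    by (intro mult_left_mono) auto
  then have "real a \<le> 2 * real s * (real a - real s)" using s by (simp add: algebra_simps)
  then show ?thesis using s False by (simp add: max_def divide_le_eq mult.commute)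
qed simp

theorem lemma5p8:
  fixes V :: "'a set" and E :: "'a \<Rightarrow> 'a \<Rightarrow> bool"
    and X T L R :: "'a set" and k :: int
  assumes "graph V E"
    and "X \<subseteq> T" and "T \<subseteq> V"
    and "lean_witness V E X T k L R"
  shows "adhesion V E ((T - L) \<union> (L \<inter> R)) \<le> max (card (L \<inter> R)) (adhesion V E T)
       \<and> real (card T) - real (card ((T - L) \<union> (L \<inter> R)))
           \<ge> real (card (L \<inter> T)) / (2 * real (max 1 (card (L \<inter> R))))"
proof
  have cut: "vertex_cut V E L R" and more: "card (L \<inter> R) < card (L \<inter> T)"
    using assms(4) unfolding lean_witness_def witness_def by auto
  show "adhesion V E ((T - L) \<union> (L \<inter> R)) \<le> max (card (L \<inter> R)) (adhesion V E T)"
    using assms(1) cut lean_witness_disjointly_linked[OF assms(3,4)]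
    by (rule adhesion_le_if_disjointly_linked)
  have "finite V" using assms(1) unfolding graph_def by blast
  have "finite T" using assms(3) \<open>finite V\<close> by (rule finite_subset)
  moreover have "finite L" using cut \<open>finite V\<close> unfolding vertex_cut_def by (metis finite_Un)
  ultimately have "real (card T) - real (card ((T - L) \<union> (L \<inter> R)))
      = real (card (L \<inter> T)) - real (card (L \<inter> R))"
    using card_Diff_Un_Int[of T L R] by linarith
  then show "real (card T) - real (card ((T - L) \<union> (L \<inter> R)))
      \<ge> real (card (L \<inter> T)) / (2 * real (max 1 (card (L \<inter> R))))"
    using diff_ge_div_twice_max_one[OF more] by simp
qed

end
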